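(* Let $\mathfrak{s}_1=\langle e_1,e_2,e_3,e_4\rangle$ be the real Lie algebra with only nonzero brackets $[e_2,e_4]=-e_1$, $[e_3,e_4]=-e_3$. Write $r=x_1e_{12}+x_2e_{13}+x_3e_{14}+x_4e_{23}+x_5e_{24}+x_6e_{34}\in\Lambda^2\mathfrak{s}_1$, $e_{ij}=e_i\wedge e_j$. Then $(\Lambda^3\mathfrak{s}_1)^{\mathfrak{s}_1}=0$, $(\Lambda^2\mathfrak{s}_1)^{\mathfrak{s}_1}=\langle e_{12}\rangle$, and the set $\mathcal{Y}_{\mathfrak{s}_1}$ of $r$-matrices equals the set of solutions of the classical Yang–Baxter equation, given by $x_5=0$, $x_3x_4=0$, $x_3x_6=0$. The orbits of $\mathrm{Aut}(\mathfrak{s}_1)$ (acting by $r\mapsto\Lambda^2T(r)$) on $\mathcal{Y}_{\mathfrak{s}_1}$ are $\{0\}$ and the following sets (all unlisted coordinates being $0$): $\mathrm{I}_\pm:\ x_1\in\mathbb{R}_\pm$; $\mathrm{II}:\ x_2\neq0$; $\mathrm{III}_\pm:\ x_1\in\mathbb{R}_\pm,\ x_2\neq0$; $\mathrm{IV}:\ x_2\in\mathbb{R},\ x_4\neq0$; $\mathrm{V}_\pm:\ x_1\in\mathbb{R}_\pm,\ x_2\in\mathbb{R},\ x_4\neq0$; $\mathrm{VI}:\ x_1,x_2\in\mathbb{R},\ x_3\neq0$; $\mathrm{VII}:\ x_2,x_4\in\mathbb{R},\ x_6\neq0$; $\mathrm{VIII}_\pm:\ x_1\in\mathbb{R}_\pm,\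 x_2,x_4\in\mathbb{R},\ x_6\neq0$. Consequently, up to Lie algebra automorphisms of $\mathfrak{s}_1$ there are exactly five classes of coboundary cocommutators $\delta_r$, $r\in\mathcal{Y}_{\mathfrak{s}_1}$, corresponding to $r$ in $\{0\}\cup\mathrm{I}_+\cup\mathrm{I}_-$ (the zero cocommutator), $\mathrm{II}\cup\mathrm{III}_\pm$, $\mathrm{IV}\cup\mathrm{V}_\pm$, $\mathrm{VI}$, and $\mathrm{VII}\cup\mathrm{VIII}_\pm$, represented respectively by $r=0,\ e_{13},\ e_{23},\ e_{14},\ e_{34}$.
   Context: $[\cdot,\cdot]$ is the algebraic Schouten bracket on $\Lambda\mathfrak{s}_1$; $(\Lambda^m\mathfrak{g})^{\mathfrak{g}}=\{w:[v,w]=0\ \forall v\in\mathfrak{g}\}$. An $r$-matrix is $r\in\Lambda^2\mathfrak{g}$ with $[r,r]\in(\Lambda^3\mathfrak{g})^{\mathfrak{g}}$ (mCYBE); the CYBE is $[r,r]=0$. $\delta_r(v)=[v,r]$; cocommutators $\delta_1,\delta_2$ are equivalent if $\delta_2=\Lambda^2T\circ\delta_1\circ T^{-1}$ for some Lie algebra automorphism $T$. $\mathbb{R}_+$, $\mathbb{R}_-$ denote positive and negative reals. *)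

theory Defs
  imports Complex_Main
begin

text \<open>Vectors are coordinate functions on the index type idx; elements of
  Lambda^2 (resp. Lambda^3) are totally antisymmetric 2- (resp. 3-) tensors,
  e_i wedge e_j being the tensor e_i (x) e_j - e_j (x) e_i.\<close>

datatype idx = I1 | I2 | I3 | I4

lemma UNIV_idx: "(UNIV :: idx set) = {I1, I2, I3, I4}"
  using idx.exhaust by auto

instance idx :: finite
  by standard (simp add: UNIV_idx)

type_synonym vec = "idx \<Rightarrow> real"
type_synonym ten2 = "idx \<Rightarrow> idx \<Rightarrow> real"
type_synonym ten3 = "idx \<Rightarrow> idx \<Rightarrow> idx \<Rightarrow> real"

definition ebas :: "idx \<Rightarrow> vec" where
  "ebas i = (\<lambda>j. if j = i then 1 else 0)"

definition sc :: "idx \<Rightarrow> idx \<Rightarrow> idx \<Rightarrow> real" where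
  "sc p q k =
     (if (p, q, k) = (I2, I4, I1) then -1
      else if (p, q, k) = (I4, I2, I1) then 1
      else if (p, q, k) = (I3, I4, I3) then -1
      else if (p, q, k) = (I4, I3, I3) then 1
      else 0)"

definition br :: "vec \<Rightarrow> vec \<Rightarrow> vec" where
  "br u v = (\<lambda>k. \<Sum>p\<in>UNIV. \<Sum>q\<in>UNIV. sc p q k * u p * v q)"

definition wedge2 :: "vec \<Rightarrow> vec \<Rightarrow> ten2" where
  "wedge2 u v = (\<lambda>i j. u i * v j - u j * v i)"

definition wedge3 :: "vec \<Rightarrow> vec \<Rightarrow> vec \<Rightarrow> ten3" where
  "wedge3 u v w = (\<lambda>i j k.
      u i * v j * w k + u j * v k * w i + u k * v i * w j
    - u j * v i * w k - u i * v k * w j - u k * v j * w i)"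

definition alt2 :: "ten2 \<Rightarrow> bool" where
  "alt2 a \<longleftrightarrow> (\<forall>i j. a i j = - a j i)"

definition alt3 :: "ten3 \<Rightarrow> bool" where
  "alt3 t \<longleftrightarrow> (\<forall>i j k. t i j k = - t j i k \<and> t i j k = - t i k j)"

text \<open>Schouten bracket [v, w] of v in g with w in Lambda^2 g, Lambda^3 g
  (derivation extension of ad_v).\<close>
definition act2 :: "vec \<Rightarrow> ten2 \<Rightarrow> ten2" where
  "act2 v a = (\<lambda>i j. (\<Sum>q\<in>UNIV. br v (ebas q) i * a q j)
                    + (\<Sum>q\<in>UNIV. br v (ebas q) j * a i q))"

definition act3 :: "vec \<Rightarrow> ten3 \<Rightarrow> ten3" where
  "act3 v t = (\<lambda>i j k. (\<Sum>q\<in>UNIV. br v (ebas q) i * t q j k)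
                      + (\<Sum>q\<in>UNIV. br v (ebas q) j * t i q k)
                      + (\<Sum>q\<in>UNIV. br v (ebas q) k * t i j q))"

definition inv2 :: "ten2 set" where
  "inv2 = {a. alt2 a \<and> (\<forall>v. act2 v a = (\<lambda>i j. 0))}"

definition inv3 :: "ten3 set" where
  "inv3 = {t. alt3 t \<and> (\<forall>v. act3 v t = (\<lambda>i j k. 0))}"

text \<open>Algebraic Schouten bracket on decomposables:
  [X^Y, Z^W] = [X,Z]^Y^W - [X,W]^Y^Z - [Y,Z]^X^W + [Y,W]^X^Z,
  extended bilinearly (r = 1/2 sum_{a,b} r_ab e_a ^ e_b).\<close>
definition schouten_dec :: "vec \<Rightarrow> vec \<Rightarrow> vec \<Rightarrow> vec \<Rightarrow> ten3" where
  "schouten_dec X Y Z W = (\<lambda>i j k.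
      wedge3 (br X Z) Y W i j k - wedge3 (br X W) Y Z i j k
    - wedge3 (br Y Z) X W i j k + wedge3 (br Y W) X Z i j k)"

definition schouten2 :: "ten2 \<Rightarrow> ten2 \<Rightarrow> ten3" where
  "schouten2 r s = (\<lambda>i j k. (1/4) *
     (\<Sum>a\<in>UNIV. \<Sum>b\<in>UNIV. \<Sum>c\<in>UNIV. \<Sum>d\<in>UNIV.
        r a b * s c d * schouten_dec (ebas a) (ebas b) (ebas c) (ebas d) i j k))"

definition rm :: "real \<Rightarrow> real \<Rightarrow> real \<Rightarrow> real \<Rightarrow> real \<Rightarrow> real \<Rightarrow> ten2" where
  "rm x1 x2 x3 x4 x5 x6 = (\<lambda>i j.
      x1 * wedge2 (ebas I1) (ebas I2) i j + x2 * wedge2 (ebas I1) (ebas I3) i j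
    + x3 * wedge2 (ebas I1) (ebas I4) i j + x4 * wedge2 (ebas I2) (ebas I3) i j
    + x5 * wedge2 (ebas I2) (ebas I4) i j + x6 * wedge2 (ebas I3) (ebas I4) i j)"

definition Ymat :: "ten2 set" where
  "Ymat = {r. alt2 r \<and> schouten2 r r \<in> inv3}"

definition CYBE_sols :: "ten2 set" where
  "CYBE_sols = {r. alt2 r \<and> schouten2 r r = (\<lambda>i j k. 0)}"

definition lin :: "(vec \<Rightarrow> vec) \<Rightarrow> bool" where
  "lin T \<longleftrightarrow> (\<forall>u v a b. T (\<lambda>i. a * u i + b * v i) = (\<lambda>i. a * T u i + b * T v i))"

definition Aut :: "(vec \<Rightarrow> vec) set" where
  "Aut = {T. lin T \<and> bij T \<and> (\<forall>u v. T (br u v) = br (T u) (T v))}"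

definition L2 :: "(vec \<Rightarrow> vec) \<Rightarrow> ten2 \<Rightarrow> ten2" where
  "L2 T r = (\<lambda>p q. \<Sum>i\<in>UNIV. \<Sum>j\<in>UNIV. r i j * T (ebas i) p * T (ebas j) q)"

definition orbit :: "ten2 \<Rightarrow> ten2 set" where
  "orbit r = {L2 T r | T. T \<in> Aut}"

definition delta :: "ten2 \<Rightarrow> vec \<Rightarrow> ten2" where
  "delta r = (\<lambda>v. act2 v r)"

definition cequiv :: "(vec \<Rightarrow> ten2) \<Rightarrow> (vec \<Rightarrow> ten2) \<Rightarrow> bool" where
  "cequiv d1 d2 \<longleftrightarrow> (\<exists>T\<in>Aut. d2 = (\<lambda>v. L2 T (d1 (inv T v))))"

text \<open>The orbit families; s = 1 gives the "+" family, s = -1 the "-" family.\<close>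
definition orbI :: "real \<Rightarrow> ten2 set" where
  "orbI s = {rm x1 0 0 0 0 0 | x1. s * x1 > 0}"
definition orbII :: "ten2 set" where
  "orbII = {rm 0 x2 0 0 0 0 | x2. x2 \<noteq> 0}"
definition orbIII :: "real \<Rightarrow> ten2 set" where
  "orbIII s = {rm x1 x2 0 0 0 0 | x1 x2. s * x1 > 0 \<and> x2 \<noteq> 0}"
definition orbIV :: "ten2 set" where
  "orbIV = {rm 0 x2 0 x4 0 0 | x2 x4. x4 \<noteq> 0}"
definition orbV :: "real \<Rightarrow> ten2 set" where
  "orbV s = {rm x1 x2 0 x4 0 0 | x1 x2 x4. s * x1 > 0 \<and> x4 \<noteq> 0}"
definition orbVI :: "ten2 set" where
  "orbVI = {rm x1 x2 x3 0 0 0 | x1 x2 x3. x3 \<noteq> 0}"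
definition orbVII :: "ten2 set" where
  "orbVII = {rm 0 x2 0 x4 0 x6 | x2 x4 x6. x6 \<noteq> 0}"
definition orbVIII :: "real \<Rightarrow> ten2 set" where
  "orbVIII s = {rm x1 x2 0 x4 0 x6 | x1 x2 x4 x6. s * x1 > 0 \<and> x6 \<noteq> 0}"

end

(*
  Write r in the coordinates x1, ..., x6 and trivectors in the coordinates of e123, e124, e134,
  e234. The action of ad v on trivectors is triangular with v4 on the diagonal and moves e124 to
  e123, so (\<Lambda>\<^sup>3 s1)\<^sup>s1 = 0: the mCYBE is the CYBE, and [r,r] = 0 becomes three polynomial
  equations. An automorphism preserves the derived algebra <e1,e3> and the ideal <e1,e2,e3>, and
  fixes e4 modulo the latter; this leaves the six-parameter triangular family aut a b c d f g.
  Its action on r is explicit, and each orbit is obtained by solving for the parameters (only the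
  sign of x1 survives when the other coordinates cannot absorb it). Finally \<delta> is equivariant
  and blind to the invariant e12-part of r, so orbits with the same pattern of x2, ..., x6 give
  equivalent cocommutators, while testing the intertwining relation on e3 and e4 separates the
  five representatives.
*)
theory Submission
  imports Defs
begin

section \<open>Coordinates\<close>

lemma sum_idx: "(\<Sum>i\<in>UNIV. f i) = f I1 + f I2 + f I3 + f I4"
  by (simp add: UNIV_idx add.assoc)

lemma all_idx: "(\<forall>i. P i) \<longleftrightarrow> P I1 \<and> P I2 \<and> P I3 \<and> P I4"
  by (metis idx.exhaust)

definition vec4 :: "real \<Rightarrow> real \<Rightarrow> real \<Rightarrow> real \<Rightarrow> vec" where
  "vec4 p q r s = (\<lambda>i. case i of I1 \<Rightarrow> p | I2 \<Rightarrow> q | I3 \<Rightarrow> r | I4 \<Rightarrow> s)"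

lemma vec4_simps [simp]:
  "vec4 p q r s I1 = p" "vec4 p q r s I2 = q" "vec4 p q r s I3 = r" "vec4 p q r s I4 = s"
  by (simp_all add: vec4_def)

lemma vec4_eq_iff [simp]:
  "vec4 p q r s = vec4 p' q' r' s' \<longleftrightarrow> p = p' \<and> q = q' \<and> r = r' \<and> s = s'"
  by (metis vec4_simps)

lemma ebas_vec4:
  "ebas I1 = vec4 1 0 0 0" "ebas I2 = vec4 0 1 0 0" "ebas I3 = vec4 0 0 1 0" "ebas I4 = vec4 0 0 0 1"
  unfolding vec4_def ebas_def by (auto split: idx.split)

lemma br_vec4: "br u v = vec4 (u I4 * v I2 - u I2 * v I4) 0 (u I4 * v I3 - u I3 * v I4) 0"
  unfolding br_def vec4_def by (auto simp: sum_idx sc_def split: idx.split)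

lemma br_ebas: "br (ebas p) (ebas q) = sc p q"
  unfolding br_def ebas_def by (simp add: sum_idx; cases p; cases q; simp)

lemma rm_apply:
  "rm x1 x2 x3 x4 x5 x6 I1 I1 = 0" "rm x1 x2 x3 x4 x5 x6 I1 I2 = x1"
  "rm x1 x2 x3 x4 x5 x6 I1 I3 = x2" "rm x1 x2 x3 x4 x5 x6 I1 I4 = x3"
  "rm x1 x2 x3 x4 x5 x6 I2 I1 = -x1" "rm x1 x2 x3 x4 x5 x6 I2 I2 = 0"
  "rm x1 x2 x3 x4 x5 x6 I2 I3 = x4" "rm x1 x2 x3 x4 x5 x6 I2 I4 = x5"
  "rm x1 x2 x3 x4 x5 x6 I3 I1 = -x2" "rm x1 x2 x3 x4 x5 x6 I3 I2 = -x4"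
  "rm x1 x2 x3 x4 x5 x6 I3 I3 = 0" "rm x1 x2 x3 x4 x5 x6 I3 I4 = x6"
  "rm x1 x2 x3 x4 x5 x6 I4 I1 = -x3" "rm x1 x2 x3 x4 x5 x6 I4 I2 = -x5"
  "rm x1 x2 x3 x4 x5 x6 I4 I3 = -x6" "rm x1 x2 x3 x4 x5 x6 I4 I4 = 0"
  by (simp_all add: rm_def wedge2_def ebas_def)

lemma rm_eq_iff [simp]:
  "rm x1 x2 x3 x4 x5 x6 = rm y1 y2 y3 y4 y5 y6 \<longleftrightarrow>
   x1 = y1 \<and> x2 = y2 \<and> x3 = y3 \<and> x4 = y4 \<and> x5 = y5 \<and> x6 = y6"
  by (metis rm_apply(2,3,4,7,8,12))

lemma rm_zero: "rm 0 0 0 0 0 0 = (\<lambda>i j. 0)"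
  by (simp add: rm_def)

lemma alt2_rm: "alt2 (rm x1 x2 x3 x4 x5 x6)"
  unfolding alt2_def by (intro allI, case_tac i; case_tac j; simp add: rm_apply)

lemma alt2_eq_rm:
  assumes "alt2 r"
  shows "r = rm (r I1 I2) (r I1 I3) (r I1 I4) (r I2 I3) (r I2 I4) (r I3 I4)"
proof (intro ext)
  fix i j
  have "r i j = - r j i" using assms unfolding alt2_def by blast
  then show "r i j = rm (r I1 I2) (r I1 I3) (r I1 I4) (r I2 I3) (r I2 I4) (r I3 I4) i j"
    by (cases i; cases j; simp only: rm_apply; linarith)
qed

lemma alt2_iff_rm: "alt2 r \<longleftrightarrow> (\<exists>x1 x2 x3 x4 x5 x6. r = rm x1 x2 x3 x4 x5 x6)"
  using alt2_eq_rm alt2_rm by blast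

definition rm3 :: "real \<Rightarrow> real \<Rightarrow> real \<Rightarrow> real \<Rightarrow> ten3" where
  "rm3 y1 y2 y3 y4 = (\<lambda>i j k.
      y1 * wedge3 (ebas I1) (ebas I2) (ebas I3) i j k + y2 * wedge3 (ebas I1) (ebas I2) (ebas I4) i j k
    + y3 * wedge3 (ebas I1) (ebas I3) (ebas I4) i j k + y4 * wedge3 (ebas I2) (ebas I3) (ebas I4) i j k)"

lemma rm3_eq_zero_iff: "rm3 y1 y2 y3 y4 = (\<lambda>i j k. 0) \<longleftrightarrow> y1 = 0 \<and> y2 = 0 \<and> y3 = 0 \<and> y4 = 0"
proof
  assume "rm3 y1 y2 y3 y4 = (\<lambda>i j k. 0)"
  then have "rm3 y1 y2 y3 y4 I1 I2 I3 = 0" "rm3 y1 y2 y3 y4 I1 I2 I4 = 0"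
    "rm3 y1 y2 y3 y4 I1 I3 I4 = 0" "rm3 y1 y2 y3 y4 I2 I3 I4 = 0" by simp_all
  then show "y1 = 0 \<and> y2 = 0 \<and> y3 = 0 \<and> y4 = 0" by (simp add: rm3_def wedge3_def ebas_def)
qed (simp add: rm3_def)

lemma alt3_eq_rm3:
  assumes "alt3 t"
  shows "t = rm3 (t I1 I2 I3) (t I1 I2 I4) (t I1 I3 I4) (t I2 I3 I4)"
proof (intro ext)
  fix i j k
  have swap12: "t i j k + t j i k = 0" and swap23: "t i j k + t i k j = 0" for i j k
    using assms unfolding alt3_def by (metis add.right_inverse)+
  show "t i j k = rm3 (t I1 I2 I3) (t I1 I2 I4) (t I1 I3 I4) (t I2 I3 I4) i j k"
    using swap12[of i j k] swap12[of i k j] swap12[of j k i]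
      swap23[of i j k] swap23[of j i k] swap23[of k i j]
    by (cases i; cases j; cases k; simp add: rm3_def wedge3_def ebas_def; linarith)
qed

lemma delta_rm: "delta (rm y1 y2 y3 y4 y5 y6) = (\<lambda>v.
   rm (v I2 * y5) (v I4 * y2 - v I3 * y3 + v I4 * y4 + v I2 * y6)
      (v I4 * y5) (v I4 * y4 - v I3 * y5) 0 (v I4 * y6))"
  unfolding delta_def act2_def br_vec4
  by (simp add: fun_eq_iff all_idx sum_idx ebas_def rm_apply algebra_simps)

lemma act3_rm3: "act3 v (rm3 y1 y2 y3 y4) =
   rm3 (v I4 * y1 - v I3 * y2 - v I2 * y4) 0 (v I4 * y3 + v I4 * y4) (v I4 * y4)"
  unfolding act3_def br_vec4
  by (simp add: fun_eq_iff all_idx sum_idx ebas_def rm3_def wedge3_def algebra_simps)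

lemma schouten_rm: "schouten2 (rm x1 x2 x3 x4 x5 x6) (rm x1 x2 x3 x4 x5 x6) =
  rm3 (2*x3*x4 - 2*x2*x5 - 2*x4*x5) (-2*x5*x5) (2*x3*x6 - 2*x5*x6) (2*x5*x6)"
  (is "?lhs = ?rhs")
proof (intro ext)
  fix i j k
  show "?lhs i j k = ?rhs i j k"
    unfolding schouten2_def schouten_dec_def br_ebas
    by (cases i; cases j; cases k;
        simp add: sum_idx rm_def rm3_def wedge2_def wedge3_def ebas_def sc_def; simp add: algebra_simps)
qed

section \<open>Invariants and the Yang-Baxter equation\<close>

lemma inv3_eq_zero: "inv3 = {(\<lambda>i j k. 0)}"
proof (intro set_eqI iffI)
  fix t assume "t \<in> inv3"
  then have "alt3 t" and act: "\<And>v. act3 v t = (\<lambda>i j k. 0)" by (auto simp: inv3_def)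
  then obtain y1 y2 y3 y4 where t: "t = rm3 y1 y2 y3 y4" using alt3_eq_rm3 by blast
  have "act3 (ebas I4) t = (\<lambda>i j k. 0)" "act3 (ebas I3) t = (\<lambda>i j k. 0)" by (fact act)+
  then have "y1 = 0 \<and> y2 = 0 \<and> y3 = 0 \<and> y4 = 0"
    unfolding t act3_rm3 rm3_eq_zero_iff ebas_vec4 by simp
  then show "t \<in> {(\<lambda>i j k. 0)}" by (simp add: t rm3_def)
qed (simp add: inv3_def alt3_def act3_def)

lemma inv2_eq: "inv2 = {(\<lambda>i j. t * wedge2 (ebas I1) (ebas I2) i j) | t. True}"
proof (intro set_eqI iffI)
  fix r assume "r \<in> inv2"
  then have "alt2 r" and act: "\<And>v. delta r v = (\<lambda>i j. 0)" by (auto simp: inv2_def delta_def)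
  then obtain y1 y2 y3 y4 y5 y6 where r: "r = rm y1 y2 y3 y4 y5 y6" using alt2_iff_rm by blast
  have "delta r (ebas I4) = rm 0 0 0 0 0 0" "delta r (ebas I3) = rm 0 0 0 0 0 0"
    by (simp_all add: act rm_zero)
  then have "r = rm y1 0 0 0 0 0" unfolding r delta_rm ebas_vec4 by simp
  then show "r \<in> {(\<lambda>i j. t * wedge2 (ebas I1) (ebas I2) i j) | t. True}" by (auto simp: rm_def)
next
  fix r assume "r \<in> {(\<lambda>i j. t * wedge2 (ebas I1) (ebas I2) i j) | t. True}"
  then obtain t where r: "r = rm t 0 0 0 0 0" by (auto simp: rm_def)
  show "r \<in> inv2"
    using delta_rm[of t 0 0 0 0 0] unfolding r by (simp add: inv2_def alt2_rm delta_def rm_zero fun_eq_iff)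
qed

lemma Ymat_eq_CYBE_sols: "Ymat = CYBE_sols"
  unfolding Ymat_def CYBE_sols_def inv3_eq_zero by simp

lemma schouten_rm_eq_zero_iff:
  "schouten2 (rm x1 x2 x3 x4 x5 x6) (rm x1 x2 x3 x4 x5 x6) = (\<lambda>i j k. 0) \<longleftrightarrow>
   x5 = 0 \<and> x3 * x4 = 0 \<and> x3 * x6 = 0"
  unfolding schouten_rm rm3_eq_zero_iff by auto

lemma Ymat_eq: "Ymat = {rm x1 x2 x3 x4 x5 x6 | x1 x2 x3 x4 x5 x6. x5 = 0 \<and> x3 * x4 = 0 \<and> x3 * x6 = 0}"
  unfolding Ymat_eq_CYBE_sols CYBE_sols_def alt2_iff_rm by (auto simp: schouten_rm_eq_zero_iff)

lemma rm_in_Ymat_iff: "rm x1 x2 x3 x4 x5 x6 \<in> Ymat \<longleftrightarrow> x5 = 0 \<and> x3 * x4 = 0 \<and> x3 * x6 = 0"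
  unfolding Ymat_eq by auto

section \<open>Automorphisms\<close>

definition aut :: "real \<Rightarrow> real \<Rightarrow> real \<Rightarrow> real \<Rightarrow> real \<Rightarrow> real \<Rightarrow> vec \<Rightarrow> vec" where
  "aut a b c d f g v =
     vec4 (a * v I1 + b * v I2 + d * v I4) (a * v I2 + f * v I4) (c * v I3 + g * v I4) (v I4)"

definition aut_inv :: "real \<Rightarrow> real \<Rightarrow> real \<Rightarrow> real \<Rightarrow> real \<Rightarrow> real \<Rightarrow> vec \<Rightarrow> vec" where
  "aut_inv a b c d f g v =
     vec4 ((v I1 - b * ((v I2 - f * v I4) / a) - d * v I4) / a) ((v I2 - f * v I4) / a)
          ((v I3 - g * v I4) / c) (v I4)"

lemma aut_ebas:
  "aut a b c d f g (ebas I1) = vec4 a 0 0 0" "aut a b c d f g (ebas I2) = vec4 b a 0 0"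
  "aut a b c d f g (ebas I3) = vec4 0 0 c 0" "aut a b c d f g (ebas I4) = vec4 d f g 1"
  by (simp_all add: aut_def ebas_vec4)

lemma aut_aut_inv: "a \<noteq> 0 \<Longrightarrow> c \<noteq> 0 \<Longrightarrow> aut a b c d f g (aut_inv a b c d f g v) = v"
  unfolding aut_def aut_inv_def vec4_def by (rule ext) (auto simp: field_simps split: idx.split)

lemma aut_inv_aut: "a \<noteq> 0 \<Longrightarrow> c \<noteq> 0 \<Longrightarrow> aut_inv a b c d f g (aut a b c d f g v) = v"
  unfolding aut_def aut_inv_def vec4_def by (rule ext) (auto simp: field_simps split: idx.split)

lemma inv_aut: "a \<noteq> 0 \<Longrightarrow> c \<noteq> 0 \<Longrightarrow> inv (aut a b c d f g) = aut_inv a b c d f g"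
  by (rule inv_unique_comp) (auto simp: aut_aut_inv aut_inv_aut)

lemma aut_in_Aut:
  assumes "a \<noteq> 0" "c \<noteq> 0"
  shows "aut a b c d f g \<in> Aut"
proof -
  have "lin (aut a b c d f g)"
    unfolding lin_def aut_def vec4_def by (intro allI ext) (simp add: algebra_simps split: idx.split)
  moreover have "bij (aut a b c d f g)"
    by (rule o_bij[of "aut_inv a b c d f g"]) (auto simp: aut_aut_inv aut_inv_aut assms)
  moreover have "aut a b c d f g (br u v) = br (aut a b c d f g u) (aut a b c d f g v)" for u v
    by (simp add: aut_def br_vec4 algebra_simps)
  ultimately show ?thesis by (simp add: Aut_def)
qed

lemma lin_matrix:
  assumes "lin T"
  shows "T v = vec4 (\<Sum>j\<in>UNIV. v j * T (ebas j) I1) (\<Sum>j\<in>UNIV. v j * T (ebas j) I2)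
                    (\<Sum>j\<in>UNIV. v j * T (ebas j) I3) (\<Sum>j\<in>UNIV. v j * T (ebas j) I4)"
proof -
  have L: "\<And>u w a b. T (\<lambda>i. a * u i + b * w i) = (\<lambda>i. a * T u i + b * T w i)"
    using assms unfolding lin_def by blast
  define w2 where "w2 = (\<lambda>i. v I3 * ebas I3 i + v I4 * ebas I4 i)"
  define w1 where "w1 = (\<lambda>i. v I2 * ebas I2 i + 1 * w2 i)"
  have v: "v = (\<lambda>i. v I1 * ebas I1 i + 1 * w1 i)"
    unfolding w1_def w2_def by (simp add: fun_eq_iff all_idx ebas_def)
  have "T v = (\<lambda>i. v I1 * T (ebas I1) i + 1 * T w1 i)" by (subst v, rule L)
  also have "T w1 = (\<lambda>i. v I2 * T (ebas I2) i + 1 * T w2 i)" unfolding w1_def by (rule L)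
  also have "T w2 = (\<lambda>i. v I3 * T (ebas I3) i + v I4 * T (ebas I4) i)" unfolding w2_def by (rule L)
  finally show ?thesis by (simp add: fun_eq_iff all_idx sum_idx add.assoc)
qed

lemma lin_zero: "lin T \<Longrightarrow> T (\<lambda>i. 0) = (\<lambda>i. 0)"
  using lin_def[THEN iffD1, rule_format, where u="\<lambda>i. 0" and v="\<lambda>i. 0" and a=0 and b=0] by simp

lemma Aut_ebas_nonzero:
  assumes "T \<in> Aut"
  shows "T (ebas i) \<noteq> (\<lambda>i. 0)"
proof
  have "lin T" and "inj T" using assms by (simp_all add: Aut_def bij_is_inj)
  assume "T (ebas i) = (\<lambda>i. 0)"
  with \<open>lin T\<close> have "T (ebas i) = T (\<lambda>i. 0)" by (simp add: lin_zero)
  with \<open>inj T\<close> have "ebas i = (\<lambda>i. 0)" by (simp add: inj_eq)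
  then have "ebas i i = 0" by simp
  then show False by (simp add: ebas_def)
qed

lemma Aut_cases:
  assumes "T \<in> Aut"
  obtains a b c d f g where "a \<noteq> 0" "c \<noteq> 0" "T = aut a b c d f g"
proof -
  have lin: "lin T" and hom: "\<And>u v. T (br u v) = br (T u) (T v)"
    using assms unfolding Aut_def by blast+
  define m where "m i j = T (ebas j) i" for i j
  have T_matrix: "T v = vec4 (v I1 * m I1 I1 + v I2 * m I1 I2 + v I3 * m I1 I3 + v I4 * m I1 I4)
                      (v I1 * m I2 I1 + v I2 * m I2 I2 + v I3 * m I2 I3 + v I4 * m I2 I4)
                      (v I1 * m I3 I1 + v I2 * m I3 I2 + v I3 * m I3 I3 + v I4 * m I3 I4)
                      (v I1 * m I4 I1 + v I2 * m I4 I2 + v I3 * m I4 I3 + v I4 * m I4 I4)" for v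
    using lin_matrix[OF lin, of v] by (simp add: m_def sum_idx)
  \<comment> \<open>the bracket relations for the pairs (2,4), (3,4), (2,3), (1,4) force the shape of aut\<close>
  note h24 = hom[of "ebas I2" "ebas I4", unfolded br_vec4 T_matrix ebas_vec4, simplified]
  note h34 = hom[of "ebas I3" "ebas I4", unfolded br_vec4 T_matrix ebas_vec4, simplified]
  note h23 = hom[of "ebas I2" "ebas I3", unfolded br_vec4 T_matrix ebas_vec4, simplified]
  note h14 = hom[of "ebas I1" "ebas I4", unfolded br_vec4 T_matrix ebas_vec4, simplified]
  have col3: "m I1 I3 = 0" "m I2 I3 = 0" "m I4 I3 = 0" using h34 by auto
  have col1: "m I2 I1 = 0" "m I4 I1 = 0" using h24 by auto
  have c: "m I3 I3 \<noteq> 0"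
    using Aut_ebas_nonzero[OF assms, of I3] col3 by (auto simp: m_def fun_eq_iff all_idx)
  have m44: "m I4 I4 = 1" using h34 c by auto
  have m31: "m I3 I1 = 0" using h14 m44 col1 by auto
  have m42: "m I4 I2 = 0" using h23 col3 c by auto
  have m32: "m I3 I2 = 0" and m22: "m I2 I2 = m I1 I1" using h24 col3 m44 m42 m31 by auto
  have a: "m I1 I1 \<noteq> 0"
    using Aut_ebas_nonzero[OF assms, of I1] col1 m31 by (auto simp: m_def fun_eq_iff all_idx)
  have "T = aut (m I1 I1) (m I1 I2) (m I3 I3) (m I1 I4) (m I2 I4) (m I3 I4)"
    by (rule ext, subst T_matrix) (simp add: aut_def col1 col3 m31 m44 m42 m32 m22)
  with a c that show ?thesis by blast
qed

lemma L2_aut: "L2 (aut a b c d f g) (rm x1 x2 x3 x4 x5 x6) =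
   rm (a*a*x1 + a*f*x3 + (b*f - a*d)*x5) (a*c*x2 + a*g*x3 + b*c*x4 + b*g*x5 - c*d*x6)
      (a*x3 + b*x5) (a*c*x4 + a*g*x5 - c*f*x6) (a*x5) (c*x6)"
  unfolding L2_def by (simp add: fun_eq_iff all_idx sum_idx rm_apply aut_ebas algebra_simps)

section \<open>Orbits of r-matrices\<close>

lemma orbit_eq_aut: "orbit r = {L2 (aut a b c d f g) r | a b c d f g. a \<noteq> 0 \<and> c \<noteq> 0}"
  unfolding orbit_def by (blast intro: aut_in_Aut elim: Aut_cases)

lemma orbit_rm: "orbit (rm x1 x2 x3 x4 x5 x6) =
  {rm (a*a*x1 + a*f*x3 + (b*f - a*d)*x5) (a*c*x2 + a*g*x3 + b*c*x4 + b*g*x5 - c*d*x6)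
      (a*x3 + b*x5) (a*c*x4 + a*g*x5 - c*f*x6) (a*x5) (c*x6) | a b c d f g. a \<noteq> 0 \<and> c \<noteq> 0}"
  by (simp only: orbit_eq_aut L2_aut)

lemma orbit_rmI:
  "a \<noteq> 0 \<Longrightarrow> c \<noteq> 0 \<Longrightarrow>
   r = rm (a*a*x1 + a*f*x3 + (b*f - a*d)*x5) (a*c*x2 + a*g*x3 + b*c*x4 + b*g*x5 - c*d*x6)
      (a*x3 + b*x5) (a*c*x4 + a*g*x5 - c*f*x6) (a*x5) (c*x6) \<Longrightarrow>
   r \<in> orbit (rm x1 x2 x3 x4 x5 x6)"
  unfolding orbit_rm by blast

lemma orbit_rmE:
  assumes "r \<in> orbit (rm x1 x2 x3 x4 x5 x6)"
  obtains a b c d f g where "a \<noteq> 0" "c \<noteq> 0"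
    "r = rm (a*a*x1 + a*f*x3 + (b*f - a*d)*x5) (a*c*x2 + a*g*x3 + b*c*x4 + b*g*x5 - c*d*x6)
      (a*x3 + b*x5) (a*c*x4 + a*g*x5 - c*f*x6) (a*x5) (c*x6)"
  using assms unfolding orbit_rm by blast

lemma rm_in_orbit: "rm x1 x2 x3 x4 x5 x6 \<in> orbit (rm x1 x2 x3 x4 x5 x6)"
  by (rule orbit_rmI[where a=1 and c=1 and b=0 and d=0 and f=0 and g=0]) simp_all

lemma orbit_subset_Ymat: "r \<in> Ymat \<Longrightarrow> orbit r \<subseteq> Ymat"
  unfolding Ymat_eq by (auto elim!: orbit_rmE)

lemma sgn_mult_square_pos: "x \<noteq> 0 \<Longrightarrow> a \<noteq> 0 \<Longrightarrow> sgn x * (a * a * x) > (0::real)"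
  by (cases "x > 0") (auto simp: zero_less_mult_iff mult_less_0_iff)

lemma sqrt_ratio:
  fixes x z :: real
  assumes "sgn x * z > 0"
  shows "sqrt (z / x) \<noteq> 0" "sqrt (z / x) * sqrt (z / x) * x = z"
proof -
  have "x \<noteq> 0" "z \<noteq> 0" and q: "z / x > 0"
    using assms by (auto simp: zero_less_mult_iff zero_less_divide_iff sgn_if split: if_splits)
  then show "sqrt (z / x) \<noteq> 0" by simp
  have "sqrt (z / x) * sqrt (z / x) = z / x" using q by (simp only: real_sqrt_mult_self abs_of_pos)
  then show "sqrt (z / x) * sqrt (z / x) * x = z" using \<open>x \<noteq> 0\<close> by simp
qed

(* On the sign-labelled orbits x1 is only rescaled by a\<^sup>2, so sgn x1 is the invariant. *)
lemma orbit_I: assumes "x1 \<noteq> 0" shows "orbit (rm x1 0 0 0 0 0) = orbI (sgn x1)"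
proof (intro set_eqI iffI)
  fix r assume "r \<in> orbit (rm x1 0 0 0 0 0)"
  then show "r \<in> orbI (sgn x1)" by (rule orbit_rmE) (auto simp: orbI_def sgn_mult_square_pos assms)
next
  fix r assume "r \<in> orbI (sgn x1)"
  then obtain z1 where z: "r = rm z1 0 0 0 0 0" "sgn x1 * z1 > 0" by (auto simp: orbI_def)
  show "r \<in> orbit (rm x1 0 0 0 0 0)"
    by (rule orbit_rmI[where a="sqrt (z1/x1)" and c=1 and b=0 and d=0 and f=0 and g=0])
       (use sqrt_ratio[OF z(2)] z in auto)
qed

lemma orbit_II: assumes "x2 \<noteq> 0" shows "orbit (rm 0 x2 0 0 0 0) = orbII"
proof (intro set_eqI iffI)
  fix r assume "r \<in> orbit (rm 0 x2 0 0 0 0)"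
  then show "r \<in> orbII" by (rule orbit_rmE) (auto simp: orbII_def assms)
next
  fix r assume "r \<in> orbII"
  then obtain z2 where z: "r = rm 0 z2 0 0 0 0" "z2 \<noteq> 0" by (auto simp: orbII_def)
  show "r \<in> orbit (rm 0 x2 0 0 0 0)"
    by (rule orbit_rmI[where a=1 and c="z2/x2" and b=0 and d=0 and f=0 and g=0])
       (use z assms in auto)
qed

lemma orbit_III:
  assumes "x1 \<noteq> 0" "x2 \<noteq> 0" shows "orbit (rm x1 x2 0 0 0 0) = orbIII (sgn x1)"
proof (intro set_eqI iffI)
  fix r assume "r \<in> orbit (rm x1 x2 0 0 0 0)"
  then show "r \<in> orbIII (sgn x1)"
    by (rule orbit_rmE) (auto simp: orbIII_def sgn_mult_square_pos assms)
next
  fix r assume "r \<in> orbIII (sgn x1)"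
  then obtain z1 z2 where z: "r = rm z1 z2 0 0 0 0" "sgn x1 * z1 > 0" "z2 \<noteq> 0"
    by (auto simp: orbIII_def)
  define a where "a = sqrt (z1/x1)"
  have a: "a \<noteq> 0" "a*a*x1 = z1" using sqrt_ratio[OF z(2)] by (simp_all add: a_def)
  show "r \<in> orbit (rm x1 x2 0 0 0 0)"
    by (rule orbit_rmI[where a=a and c="z2/(a*x2)" and b=0 and d=0 and f=0 and g=0])
       (use z assms a in auto)
qed

lemma orbit_IV: assumes "x4 \<noteq> 0" shows "orbit (rm 0 x2 0 x4 0 0) = orbIV"
proof (intro set_eqI iffI)
  fix r assume "r \<in> orbit (rm 0 x2 0 x4 0 0)"
  then show "r \<in> orbIV" by (rule orbit_rmE) (auto simp: orbIV_def assms)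
next
  fix r assume "r \<in> orbIV"
  then obtain z2 z4 where z: "r = rm 0 z2 0 z4 0 0" "z4 \<noteq> 0" by (auto simp: orbIV_def)
  define c where "c = z4/x4"
  have c: "c \<noteq> 0" "c*x4 = z4" using z assms by (simp_all add: c_def)
  show "r \<in> orbit (rm 0 x2 0 x4 0 0)"
    by (rule orbit_rmI[where a=1 and c=c and b="(z2 - c*x2)/(c*x4)" and d=0 and f=0 and g=0])
       (use z assms c in \<open>auto simp: field_simps\<close>)
qed

lemma orbit_V:
  assumes "x1 \<noteq> 0" "x4 \<noteq> 0" shows "orbit (rm x1 x2 0 x4 0 0) = orbV (sgn x1)"
proof (intro set_eqI iffI)
  fix r assume "r \<in> orbit (rm x1 x2 0 x4 0 0)"
  then show "r \<in> orbV (sgn x1)" by (rule orbit_rmE) (auto simp: orbV_def sgn_mult_square_pos assms)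
next
  fix r assume "r \<in> orbV (sgn x1)"
  then obtain z1 z2 z4 where z: "r = rm z1 z2 0 z4 0 0" "sgn x1 * z1 > 0" "z4 \<noteq> 0"
    by (auto simp: orbV_def)
  define a where "a = sqrt (z1/x1)"
  have a: "a \<noteq> 0" "a*a*x1 = z1" using sqrt_ratio[OF z(2)] by (simp_all add: a_def)
  define c where "c = z4/(a*x4)"
  have c: "c \<noteq> 0" "a*c*x4 = z4" using z assms a by (simp_all add: c_def)
  show "r \<in> orbit (rm x1 x2 0 x4 0 0)"
    by (rule orbit_rmI[where a=a and c=c and b="(z2 - a*c*x2)/(c*x4)" and d=0 and f=0 and g=0])
       (use z assms a c in \<open>auto simp: field_simps\<close>)
qed

lemma orbit_VI: assumes "x3 \<noteq> 0" shows "orbit (rm x1 x2 x3 0 0 0) = orbVI"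
proof (intro set_eqI iffI)
  fix r assume "r \<in> orbit (rm x1 x2 x3 0 0 0)"
  then show "r \<in> orbVI" by (rule orbit_rmE) (auto simp: orbVI_def assms)
next
  fix r assume "r \<in> orbVI"
  then obtain z1 z2 z3 where z: "r = rm z1 z2 z3 0 0 0" "z3 \<noteq> 0" by (auto simp: orbVI_def)
  define a where "a = z3/x3"
  have a: "a \<noteq> 0" "a*x3 = z3" using z assms by (simp_all add: a_def)
  show "r \<in> orbit (rm x1 x2 x3 0 0 0)"
    by (rule orbit_rmI[where a=a and c=1 and b=0 and d=0 and f="(z1 - a*a*x1)/(a*x3)"
          and g="(z2 - a*x2)/(a*x3)"])
       (use z assms a in \<open>auto simp: field_simps\<close>)
qed

lemma orbit_VII: assumes "x6 \<noteq> 0" shows "orbit (rm 0 x2 0 x4 0 x6) = orbVII"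
proof (intro set_eqI iffI)
  fix r assume "r \<in> orbit (rm 0 x2 0 x4 0 x6)"
  then show "r \<in> orbVII" by (rule orbit_rmE) (auto simp: orbVII_def assms)
next
  fix r assume "r \<in> orbVII"
  then obtain z2 z4 z6 where z: "r = rm 0 z2 0 z4 0 z6" "z6 \<noteq> 0" by (auto simp: orbVII_def)
  define c where "c = z6/x6"
  have c: "c \<noteq> 0" "c*x6 = z6" using z assms by (simp_all add: c_def)
  show "r \<in> orbit (rm 0 x2 0 x4 0 x6)"
    by (rule orbit_rmI[where a=1 and c=c and b=0 and d="(c*x2 - z2)/(c*x6)"
          and f="(c*x4 - z4)/(c*x6)" and g=0])
       (use z assms c in \<open>auto simp: field_simps\<close>)
qed

lemma orbit_VIII:
  assumes "x1 \<noteq> 0" "x6 \<noteq> 0" shows "orbit (rm x1 x2 0 x4 0 x6) = orbVIII (sgn x1)"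
proof (intro set_eqI iffI)
  fix r assume "r \<in> orbit (rm x1 x2 0 x4 0 x6)"
  then show "r \<in> orbVIII (sgn x1)"
    by (rule orbit_rmE) (auto simp: orbVIII_def sgn_mult_square_pos assms)
next
  fix r assume "r \<in> orbVIII (sgn x1)"
  then obtain z1 z2 z4 z6 where z: "r = rm z1 z2 0 z4 0 z6" "sgn x1 * z1 > 0" "z6 \<noteq> 0"
    by (auto simp: orbVIII_def)
  define a where "a = sqrt (z1/x1)"
  have a: "a \<noteq> 0" "a*a*x1 = z1" using sqrt_ratio[OF z(2)] by (simp_all add: a_def)
  define c where "c = z6/x6"
  have c: "c \<noteq> 0" "c*x6 = z6" using z assms by (simp_all add: c_def)
  show "r \<in> orbit (rm x1 x2 0 x4 0 x6)"
    by (rule orbit_rmI[where a=a and c=c and b=0 and d="(a*c*x2 - z2)/(c*x6)"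
          and f="(a*c*x4 - z4)/(c*x6)" and g=0])
       (use z assms a c in \<open>auto simp: field_simps\<close>)
qed

lemma orbit_zero: "orbit (rm 0 0 0 0 0 0) = {rm 0 0 0 0 0 0}"
  unfolding orbit_rm by (auto intro: exI[of _ 1])

lemmas orbit_normal_forms =
  orbit_zero orbit_I orbit_II orbit_III orbit_IV orbit_V orbit_VI orbit_VII orbit_VIII

lemma orbit_Ymat_cases:
  assumes "x5 = 0" "x3 * x4 = 0" "x3 * x6 = 0"
  shows "orbit (rm x1 x2 x3 x4 x5 x6) \<in> {{rm 0 0 0 0 0 0}, orbI 1, orbI (-1), orbII,
           orbIII 1, orbIII (-1), orbIV, orbV 1, orbV (-1), orbVI, orbVII, orbVIII 1, orbVIII (-1)}"
proof -
  consider "x3 \<noteq> 0" | "x3 = 0" "x6 \<noteq> 0" | "x3 = 0" "x6 = 0" "x4 \<noteq> 0"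
    | "x3 = 0" "x6 = 0" "x4 = 0" "x2 \<noteq> 0" | "x3 = 0" "x6 = 0" "x4 = 0" "x2 = 0"
    by blast
  then show ?thesis
  proof cases
    case 1
    with assms have "x4 = 0" "x6 = 0" by simp_all
    with 1 assms show ?thesis by (simp add: orbit_VI)
  next
    case 2
    with assms show ?thesis
      by (cases "x1 = 0"; cases "x1 > 0") (simp_all add: orbit_VII orbit_VIII sgn_if)
  next
    case 3
    with assms show ?thesis
      by (cases "x1 = 0"; cases "x1 > 0") (simp_all add: orbit_IV orbit_V sgn_if)
  next
    case 4
    with assms show ?thesis
      by (cases "x1 = 0"; cases "x1 > 0") (simp_all add: orbit_II orbit_III sgn_if)
  next
    case 5
    with assms show ?thesis
      by (cases "x1 = 0"; cases "x1 > 0") (simp_all add: orbit_zero orbit_I sgn_if)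
  qed
qed


lemma orbit_image_Ymat: "orbit ` Ymat = {{rm 0 0 0 0 0 0}, orbI 1, orbI (-1), orbII,
           orbIII 1, orbIII (-1), orbIV, orbV 1, orbV (-1), orbVI, orbVII, orbVIII 1, orbVIII (-1)}"
    (is "_ = ?orbits")
proof
  show "orbit ` Ymat \<subseteq> ?orbits"
  proof
    fix S assume "S \<in> orbit ` Ymat"
    then obtain x1 x2 x3 x4 x5 x6 where S: "S = orbit (rm x1 x2 x3 x4 x5 x6)"
      and Y: "x5 = 0" "x3 * x4 = 0" "x3 * x6 = 0"
      unfolding Ymat_eq by blast
    show "S \<in> ?orbits" unfolding S using Y by (rule orbit_Ymat_cases)
  qed
  have "?orbits = orbit ` {rm 0 0 0 0 0 0, rm 1 0 0 0 0 0, rm (-1) 0 0 0 0 0, rm 0 1 0 0 0 0,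
      rm 1 1 0 0 0 0, rm (-1) 1 0 0 0 0, rm 0 0 0 1 0 0, rm 1 0 0 1 0 0, rm (-1) 0 0 1 0 0,
      rm 0 0 1 0 0 0, rm 0 0 0 0 0 1, rm 1 0 0 0 0 1, rm (-1) 0 0 0 0 1}"
  proof -
    have "orbit (rm 0 0 0 0 0 0) = {rm 0 0 0 0 0 0}" "orbit (rm 1 0 0 0 0 0) = orbI 1"
      "orbit (rm (-1) 0 0 0 0 0) = orbI (-1)" "orbit (rm 0 1 0 0 0 0) = orbII"
      "orbit (rm 1 1 0 0 0 0) = orbIII 1" "orbit (rm (-1) 1 0 0 0 0) = orbIII (-1)"
      "orbit (rm 0 0 0 1 0 0) = orbIV" "orbit (rm 1 0 0 1 0 0) = orbV 1"
      "orbit (rm (-1) 0 0 1 0 0) = orbV (-1)" "orbit (rm 0 0 1 0 0 0) = orbVI"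
      "orbit (rm 0 0 0 0 0 1) = orbVII" "orbit (rm 1 0 0 0 0 1) = orbVIII 1"
      "orbit (rm (-1) 0 0 0 0 1) = orbVIII (-1)"
      by (simp_all add: orbit_normal_forms)
    then show ?thesis by (simp only: image_insert image_empty)
  qed
  also have "\<dots> \<subseteq> orbit ` Ymat" by (intro image_mono) (simp add: rm_in_Ymat_iff)
  finally show "?orbits \<subseteq> orbit ` Ymat" .
qed

lemma Union_orbit_image_Ymat: "\<Union> (orbit ` Ymat) = Ymat"
proof
  show "\<Union> (orbit ` Ymat) \<subseteq> Ymat" using orbit_subset_Ymat by blast
  show "Ymat \<subseteq> \<Union> (orbit ` Ymat)"
  proof
    fix r assume "r \<in> Ymat"
    then obtain x1 x2 x3 x4 x5 x6 where "r = rm x1 x2 x3 x4 x5 x6" unfolding Ymat_eq by blast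
    then have "r \<in> orbit r" by (simp add: rm_in_orbit)
    with \<open>r \<in> Ymat\<close> show "r \<in> \<Union> (orbit ` Ymat)" by blast
  qed
qed

section \<open>Coboundary cocommutators\<close>

lemma delta_L2_aut:
  assumes "a \<noteq> 0" "c \<noteq> 0"
  shows "delta (L2 (aut a b c d f g) (rm x1 x2 x3 x4 x5 x6)) v =
         L2 (aut a b c d f g) (delta (rm x1 x2 x3 x4 x5 x6) (aut_inv a b c d f g v))"
  using assms by (simp add: L2_aut delta_rm aut_inv_def field_simps)

lemma delta_L2_Aut:
  assumes "T \<in> Aut" "alt2 r"
  shows "delta (L2 T r) = (\<lambda>v. L2 T (delta r (inv T v)))"
proof -
  obtain a b c d f g where "a \<noteq> 0" "c \<noteq> 0" and T: "T = aut a b c d f g"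
    using assms(1) by (rule Aut_cases)
  moreover obtain x1 x2 x3 x4 x5 x6 where r: "r = rm x1 x2 x3 x4 x5 x6"
    using assms(2) alt2_iff_rm by blast
  ultimately show ?thesis unfolding T r by (intro ext) (simp add: delta_L2_aut inv_aut)
qed

lemma cequiv_delta_L2: "T \<in> Aut \<Longrightarrow> alt2 r \<Longrightarrow> cequiv (delta r) (delta (L2 T r))"
  unfolding cequiv_def by (blast intro: delta_L2_Aut)

(* The first coordinate z of the image is free: \<delta> does not see the e12-part. *)
lemma cequiv_delta_rmI:
  assumes "a \<noteq> 0" "c \<noteq> 0" "L2 (aut a b c d f g) (rm x1 x2 x3 x4 x5 x6) = rm z y2 y3 y4 y5 y6"
  shows "cequiv (delta (rm x1 x2 x3 x4 x5 x6)) (delta (rm y1 y2 y3 y4 y5 y6))"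
proof -
  have "cequiv (delta (rm x1 x2 x3 x4 x5 x6)) (delta (L2 (aut a b c d f g) (rm x1 x2 x3 x4 x5 x6)))"
    using assms(1,2) by (intro cequiv_delta_L2 aut_in_Aut alt2_rm)
  moreover have "delta (L2 (aut a b c d f g) (rm x1 x2 x3 x4 x5 x6)) = delta (rm y1 y2 y3 y4 y5 y6)"
    unfolding assms(3) by (simp add: delta_rm)
  ultimately show ?thesis by simp
qed

lemma not_cequiv_delta_I:
  assumes "\<And>a b c d f g. a \<noteq> 0 \<Longrightarrow> c \<noteq> 0 \<Longrightarrow>
     delta s (aut a b c d f g (ebas I4)) \<noteq> L2 (aut a b c d f g) (delta r (ebas I4))
   \<or> delta s (aut a b c d f g (ebas I3)) \<noteq> L2 (aut a b c d f g) (delta r (ebas I3))"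
  shows "\<not> cequiv (delta r) (delta s)"
proof
  assume "cequiv (delta r) (delta s)"
  then obtain T where "T \<in> Aut" and s: "delta s = (\<lambda>v. L2 T (delta r (inv T v)))"
    unfolding cequiv_def by blast
  then obtain a b c d f g where "a \<noteq> 0" "c \<noteq> 0" and T: "T = aut a b c d f g"
    by (elim Aut_cases)
  then have "delta s (aut a b c d f g w) = L2 (aut a b c d f g) (delta r w)" for w
    by (simp add: s inv_aut aut_inv_aut)
  with assms[OF \<open>a \<noteq> 0\<close> \<open>c \<noteq> 0\<close>] show False by blast
qed

definition cocomm_reps :: "ten2 list" where
  "cocomm_reps = [rm 0 0 0 0 0 0, rm 0 1 0 0 0 0, rm 0 0 0 1 0 0, rm 0 0 1 0 0 0, rm 0 0 0 0 0 1]"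

definition cocomm_classes :: "ten2 set list" where
  "cocomm_classes = [{rm 0 0 0 0 0 0} \<union> orbI 1 \<union> orbI (-1), orbII \<union> orbIII 1 \<union> orbIII (-1),
     orbIV \<union> orbV 1 \<union> orbV (-1), orbVI, orbVII \<union> orbVIII 1 \<union> orbVIII (-1)]"

lemma less_5_cases: "k < (5::nat) \<Longrightarrow> k = 0 \<or> k = 1 \<or> k = 2 \<or> k = 3 \<or> k = 4"
  by auto

lemma cocomm_reps_not_cequiv:
  assumes "k < 5" "l < 5" "k \<noteq> l"
  shows "\<not> cequiv (delta (cocomm_reps ! k)) (delta (cocomm_reps ! l))"
  by (rule not_cequiv_delta_I)
     (use less_5_cases[OF assms(1)] less_5_cases[OF assms(2)] assms(3) in
       \<open>auto simp: cocomm_reps_def delta_rm L2_aut aut_def ebas_vec4\<close>)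

lemma delta_rm_e12: "delta (rm x1 0 0 0 0 0) = (\<lambda>v i j. 0)"
  by (simp add: delta_rm rm_zero)

lemma cocomm_classes_cequiv:
  assumes "k < 5" "r \<in> cocomm_classes ! k"
  shows "cequiv (delta (cocomm_reps ! k)) (delta r)"
  using less_5_cases[OF assms(1)]
proof (elim disjE)
  assume "k = 0"
  with assms obtain y1 where "r = rm y1 0 0 0 0 0" by (auto simp: cocomm_classes_def orbI_def)
  with \<open>k = 0\<close> show ?thesis
    by (simp add: cocomm_reps_def)
       (rule cequiv_delta_rmI[where a=1 and c=1 and b=0 and d=0 and f=0 and g=0 and z=0];
        simp add: L2_aut)
next
  assume "k = 1"
  with assms obtain y1 y2 where "r = rm y1 y2 0 0 0 0" "y2 \<noteq> 0"
    by (auto simp: cocomm_classes_def orbII_def orbIII_def)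
  with \<open>k = 1\<close> show ?thesis
    by (simp add: cocomm_reps_def)
       (rule cequiv_delta_rmI[where a=1 and c=y2 and b=0 and d=0 and f=0 and g=0 and z=0];
        simp add: L2_aut)
next
  assume "k = 2"
  with assms obtain y1 y2 y4 where "r = rm y1 y2 0 y4 0 0" "y4 \<noteq> 0"
    by (auto simp: cocomm_classes_def orbIV_def orbV_def)
  with \<open>k = 2\<close> show ?thesis
    by (simp add: cocomm_reps_def numeral_2_eq_2)
       (rule cequiv_delta_rmI[where a=1 and c=y4 and b="y2/y4" and d=0 and f=0 and g=0 and z=0];
        simp add: L2_aut)
next
  assume "k = 3"
  with assms obtain y1 y2 y3 where "r = rm y1 y2 y3 0 0 0" "y3 \<noteq> 0"
    by (auto simp: cocomm_classes_def orbVI_def)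
  with \<open>k = 3\<close> show ?thesis
    by (simp add: cocomm_reps_def numeral_3_eq_3)
       (rule cequiv_delta_rmI[where a=y3 and c=1 and b=0 and d=0 and f=0 and g="y2/y3" and z=0];
        simp add: L2_aut)
next
  assume "k = 4"
  with assms obtain y1 y2 y4 y6 where "r = rm y1 y2 0 y4 0 y6" "y6 \<noteq> 0"
    by (auto simp: cocomm_classes_def orbVII_def orbVIII_def)
  with \<open>k = 4\<close> show ?thesis
    by (simp add: cocomm_reps_def numeral_eq_Suc)
       (rule cequiv_delta_rmI[where a=1 and c=y6 and b=0 and d="-y2/y6" and f="-y4/y6" and g=0
          and z=0]; simp add: L2_aut)
qed

lemma cocomm_reps_in_classes: "k < 5 \<Longrightarrow> cocomm_reps ! k \<in> cocomm_classes ! k"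
  by (drule less_5_cases)
     (auto simp: cocomm_reps_def cocomm_classes_def orbII_def orbIV_def orbVI_def orbVII_def)

lemma Ymat_eq_Union_cocomm_classes: "Ymat = \<Union> (set cocomm_classes)"
  using Union_orbit_image_Ymat unfolding orbit_image_Ymat cocomm_classes_def by auto

theorem mainTheorem13:
  shows "(inv3 = {(\<lambda>i j k. 0)}) \<and>
    (inv2 = {(\<lambda>i j. t * wedge2 (ebas I1) (ebas I2) i j) | t. True}) \<and>
    (Ymat = CYBE_sols) \<and>
    (Ymat = {rm x1 x2 x3 x4 x5 x6 | x1 x2 x3 x4 x5 x6.
                   x5 = 0 \<and> x3 * x4 = 0 \<and> x3 * x6 = 0}) \<and>
    (orbit ` Ymat = {{rm 0 0 0 0 0 0}, orbI 1, orbI (-1), orbII,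
                         orbIII 1, orbIII (-1), orbIV, orbV 1, orbV (-1), orbVI,
                         orbVII, orbVIII 1, orbVIII (-1)}) \<and>
    ((\<forall>r \<in> {rm 0 0 0 0 0 0} \<union> orbI 1 \<union> orbI (-1). delta r = (\<lambda>v i j. 0))) \<and>
    (let reps = [rm 0 0 0 0 0 0, rm 0 1 0 0 0 0, rm 0 0 0 1 0 0,
                     rm 0 0 1 0 0 0, rm 0 0 0 0 0 1];
             cls = [{rm 0 0 0 0 0 0} \<union> orbI 1 \<union> orbI (-1),
                    orbII \<union> orbIII 1 \<union> orbIII (-1),
                    orbIV \<union> orbV 1 \<union> orbV (-1),
                    orbVI,
                    orbVII \<union> orbVIII 1 \<union> orbVIII (-1)]
         in Ymat = \<Union>(set cls)
            \<and> (\<forall>k<5. reps ! k \<in> cls ! k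
                   \<and> (\<forall>r \<in> cls ! k. cequiv (delta (reps ! k)) (delta r)))
            \<and> (\<forall>k<5. \<forall>l<5. k \<noteq> l \<longrightarrow> \<not> cequiv (delta (reps ! k)) (delta (reps ! l))))"
proof -
  have delta_zero: "\<forall>r \<in> {rm 0 0 0 0 0 0} \<union> orbI 1 \<union> orbI (-1). delta r = (\<lambda>v i j. 0)"
    by (auto simp: orbI_def delta_rm_e12)
  have classes: "\<forall>k<5. cocomm_reps ! k \<in> cocomm_classes ! k \<and>
      (\<forall>r \<in> cocomm_classes ! k. cequiv (delta (cocomm_reps ! k)) (delta r))"
    using cocomm_reps_in_classes cocomm_classes_cequiv by blast
  have distinct: "\<forall>k<5. \<forall>l<5. k \<noteq> l \<longrightarrow>
      \<not> cequiv (delta (cocomm_reps ! k)) (delta (cocomm_reps ! l))"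
    using cocomm_reps_not_cequiv by blast
  show ?thesis
    unfolding Let_def cocomm_reps_def [symmetric] cocomm_classes_def [symmetric]
    by (intro conjI inv3_eq_zero inv2_eq Ymat_eq_CYBE_sols Ymat_eq orbit_image_Ymat delta_zero
        Ymat_eq_Union_cocomm_classes classes distinct)
qed

end
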